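(* Let $(G,\cdot)$ be a loop with identity $e$ and $(H,\cdot)$ a non-trivial subloop of exponent $2$ (i.e. $ss=e$ for all $s\in H$) such that $(xs\cdot z)s=x(sz\cdot s)$ for all $x,z\in G$, $s\in H$. Then for every $s\in H$, the map $L_sR_s^{-1}$ is a second Smarandache semi-automorphism of $G_H$, i.e. $e(L_sR_s^{-1})=e$ and $(ty\cdot t)L_sR_s^{-1}=(tL_sR_s^{-1}\cdot yL_sR_s^{-1})\,tL_sR_s^{-1}$ for all $y\in G$, $t\in H$.
   Context: Juxtaposition binds more tightly than $\cdot$. Maps are written on the right and composed left to right; $xR_s=x\cdot s$, $xL_s=s\cdot x$. *)

theory Defs
  imports Main
begin

definition loop :: "'a set \<Rightarrow> ('a \<Rightarrow> 'a \<Rightarrow> 'a) \<Rightarrow> 'a \<Rightarrow> bool" where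
  "loop G m e \<longleftrightarrow> e \<in> G \<and> (\<forall>x\<in>G. \<forall>y\<in>G. m x y \<in> G)
     \<and> (\<forall>x\<in>G. m e x = x \<and> m x e = x)
     \<and> (\<forall>a\<in>G. \<forall>b\<in>G. \<exists>!x. x \<in> G \<and> m a x = b)
     \<and> (\<forall>a\<in>G. \<forall>b\<in>G. \<exists>!y. y \<in> G \<and> m y a = b)"

definition subloop :: "'a set \<Rightarrow> 'a set \<Rightarrow> ('a \<Rightarrow> 'a \<Rightarrow> 'a) \<Rightarrow> 'a \<Rightarrow> bool" where
  "subloop H G m e \<longleftrightarrow> H \<subseteq> G \<and> loop H m e"

definition rinv :: "'a set \<Rightarrow> ('a \<Rightarrow> 'a \<Rightarrow> 'a) \<Rightarrow> 'a \<Rightarrow> 'a \<Rightarrow> 'a" where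
  "rinv G m s x = (THE y. y \<in> G \<and> m y s = x)"

text \<open>The map L_s R_s^{-1} (maps act on the right, composed left to right):
  x \<mapsto> (s x) R_s^{-1}.\<close>
definition LRinv :: "'a set \<Rightarrow> ('a \<Rightarrow> 'a \<Rightarrow> 'a) \<Rightarrow> 'a \<Rightarrow> 'a \<Rightarrow> 'a" where
  "LRinv G m s x = rinv G m s (m s x)"

end

theory Submission
  imports Defs
begin

text \<open>The identity \<open>(xs\<cdot>z)s = x(sz\<cdot>s)\<close> with \<open>z = e\<close> and \<open>ss = e\<close> gives the right inverse
  property \<open>(xs)s = x\<close>, so \<open>R\<^sub>s\<^sup>-\<^sup>1 = R\<^sub>s\<close> and \<open>x L\<^sub>sR\<^sub>s\<^sup>-\<^sup>1 = sx\<cdot>s\<close>. The semi-automorphism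
  law then follows from the same identity, applied once with \<open>t\<close> and twice with \<open>s\<close>,
  each time cancelling a factor \<open>s\<close> by the right inverse property.\<close>

definition right_bol_element :: "'a set \<Rightarrow> ('a \<Rightarrow> 'a \<Rightarrow> 'a) \<Rightarrow> 'a \<Rightarrow> bool" where
  "right_bol_element G m s \<longleftrightarrow> (\<forall>x\<in>G. \<forall>z\<in>G. m (m (m x s) z) s = m x (m (m s z) s))"

lemma loop_closed: "loop G m e \<Longrightarrow> x \<in> G \<Longrightarrow> y \<in> G \<Longrightarrow> m x y \<in> G"
  by (simp add: loop_def)

lemma loop_identity_in: "loop G m e \<Longrightarrow> e \<in> G"
  by (simp add: loop_def)

lemma loop_right_identity: "loop G m e \<Longrightarrow> x \<in> G \<Longrightarrow> m x e = x"
  by (simp add: loop_def)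

lemma loop_right_div_unique: "loop G m e \<Longrightarrow> a \<in> G \<Longrightarrow> b \<in> G \<Longrightarrow> \<exists>!y. y \<in> G \<and> m y a = b"
  by (simp add: loop_def)

lemma rinv_eqI:
  assumes G: "loop G m e" and "s \<in> G" "y \<in> G" "m y s = x"
  shows "rinv G m s x = y"
  unfolding rinv_def
proof (rule the1_equality)
  have "x \<in> G" using assms loop_closed[OF G] by blast
  then show "\<exists>!y. y \<in> G \<and> m y s = x" using loop_right_div_unique[OF G \<open>s \<in> G\<close>] by simp
  show "y \<in> G \<and> m y s = x" using assms by simp
qed

lemma right_inverse_property:
  assumes G: "loop G m e" and s: "s \<in> G" "m s s = e" "right_bol_element G m s" and x: "x \<in> G"
  shows "m (m x s) s = x"
proof -
  have "m (m (m x s) e) s = m x (m (m s e) s)"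
    using s(3) x loop_identity_in[OF G] unfolding right_bol_element_def by simp
  then show ?thesis
    using s x by (simp add: loop_closed[OF G] loop_right_identity[OF G])
qed

lemma LRinv_eq:
  assumes G: "loop G m e" and s: "s \<in> G" "m s s = e" "right_bol_element G m s" and x: "x \<in> G"
  shows "LRinv G m s x = m (m s x) s"
  unfolding LRinv_def
proof (rule rinv_eqI[OF G s(1)])
  have "m s x \<in> G" using s(1) x by (rule loop_closed[OF G])
  then show "m (m s x) s \<in> G" and "m (m (m s x) s) s = m s x"
    using s(1) by (simp_all add: loop_closed[OF G] right_inverse_property[OF G s])
qed

lemma LRinv_identity:
  assumes G: "loop G m e" and s: "s \<in> G" "m s s = e" "right_bol_element G m s"
  shows "LRinv G m s e = e"
  using LRinv_eq[OF G s loop_identity_in[OF G]] s by (simp add: loop_right_identity[OF G])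

lemma LRinv_semi_automorphism:
  assumes G: "loop G m e" and s: "s \<in> G" "m s s = e" "right_bol_element G m s"
    and t: "t \<in> G" "right_bol_element G m t" and y: "y \<in> G"
  shows "LRinv G m s (m (m t y) t) = m (m (LRinv G m s t) (LRinv G m s y)) (LRinv G m s t)"
proof -
  note cl = loop_closed[OF G] and rip = right_inverse_property[OF G s]
  have st: "m s t \<in> G" and sty: "m (m s t) y \<in> G" using s(1) t(1) y by (simp_all add: cl)
  have bol_s: "m (m (m x s) z) s = m x (m (m s z) s)" if "x \<in> G" "z \<in> G" for x z
    using s(3) that unfolding right_bol_element_def by simp
  have "LRinv G m s (m (m t y) t) = m (m s (m (m t y) t)) s"
    using t(1) y by (simp add: LRinv_eq[OF G s] cl)
  also have "m s (m (m t y) t) = m (m (m s t) y) t"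
    using t(2) y s(1) unfolding right_bol_element_def by simp
  also have "m (m (m (m s t) y) t) s = m (m (m (m (m (m s t) y) s) s) t) s"
    by (simp add: rip[OF sty])
  also have "\<dots> = m (m (m (m s t) y) s) (m (m s t) s)"
    using s(1) sty t(1) by (simp add: bol_s cl)
  also have "m (m (m s t) y) s = m (m (m (m (m s t) s) s) y) s"
    by (simp add: rip[OF st])
  also have "\<dots> = m (m (m s t) s) (m (m s y) s)"
    using s(1) st y by (simp add: bol_s cl)
  finally show ?thesis
    using t(1) y by (simp add: LRinv_eq[OF G s])
qed

theorem corollary3p3:
  fixes G H :: "'a set" and m :: "'a \<Rightarrow> 'a \<Rightarrow> 'a" and e :: 'a
  assumes "loop G m e"
    and "subloop H G m e"
    and "H \<noteq> {e}"
    and "\<forall>s\<in>H. m s s = e"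
    and "\<forall>x\<in>G. \<forall>z\<in>G. \<forall>s\<in>H. m (m (m x s) z) s = m x (m (m s z) s)"
  shows "\<forall>s\<in>H. LRinv G m s e = e \<and>
           (\<forall>y\<in>G. \<forall>t\<in>H. LRinv G m s (m (m t y) t)
               = m (m (LRinv G m s t) (LRinv G m s y)) (LRinv G m s t))"
proof (intro ballI conjI)
  have HG: "H \<subseteq> G" using assms(2) by (simp add: subloop_def)
  have bol: "right_bol_element G m u" if "u \<in> H" for u
    using assms(5) that unfolding right_bol_element_def by simp
  fix s assume "s \<in> H"
  then have s: "s \<in> G" "m s s = e" "right_bol_element G m s"
    using HG assms(4) bol by auto
  show "LRinv G m s e = e"
    by (rule LRinv_identity[OF assms(1) s])
  fix y t assume "y \<in> G" "t \<in> H"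
  then show "LRinv G m s (m (m t y) t) = m (m (LRinv G m s t) (LRinv G m s y)) (LRinv G m s t)"
    using HG bol by (intro LRinv_semi_automorphism[OF assms(1) s]) auto
qed

end
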